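(* Let $N\ge 2$, $T\ge1$, $\alpha\in(0,1)$, $\eta>0$, and define the Tsallis entropy $S_\alpha(p)=\frac{1}{1-\alpha}\big(1-\sum_{i=1}^N p_i^\alpha\big)$ for $p\in\Delta_N$ and $\tilde\Phi(G)=\max_{p\in\Delta_N}\{\langle p,G\rangle-\eta S_\alpha(p)\}$. Then for every loss sequence $g_1,\dots,g_T\in[-1,0]^N$ fixed in advance, the algorithm GBPA$(\tilde\Phi)$ has expected regret \[\mathbb{E}\,\mathrm{Regret}_T\le \eta\,\frac{N^{1-\alpha}-1}{1-\alpha}+\frac{N^\alpha T}{2\eta\alpha}.\]
   Context: $\Delta_N$ is the probability simplex in $\mathbb{R}^N$, $e_i$ the standard basis vector. Algorithm GBPA$(\tilde\Phi)$: set $\hat G_0=0$; for $t=1,\dots,T$: sample arm $i_t$ according to $p_t=\nabla\tilde\Phi(\hat G_{t-1})$; incur and observe only $g_{t,i_t}$; set $\hat G_t=\hat G_{t-1}+\frac{g_{t,i_t}}{p_{t,i_t}}e_{i_t}$. Regret is $\mathrm{Regret}_T=\max_{i}\sum_{t=1}^T(g_{t,i}-g_{t,i_t})$ and the expectation is over the algorithm's sampling. *)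

theory Defs
  imports "HOL-Analysis.Analysis"
begin

definition prob_simplex :: "(real ^ 'n::finite) set" where
  "prob_simplex = {p. (\<forall>i. 0 \<le> p $ i) \<and> (\<Sum>i\<in>UNIV. p $ i) = 1}"

definition tsallis :: "real \<Rightarrow> real ^ 'n::finite \<Rightarrow> real" where
  "tsallis \<alpha> p = (1 - (\<Sum>i\<in>UNIV. (p $ i) powr \<alpha>)) / (1 - \<alpha>)"

definition PhiT :: "real \<Rightarrow> real \<Rightarrow> real ^ 'n::finite \<Rightarrow> real" where
  "PhiT \<eta> \<alpha> G = (SUP p\<in>prob_simplex. inner p G - \<eta> * tsallis \<alpha> p)"

definition grad :: "(real ^ 'n::finite \<Rightarrow> real) \<Rightarrow> real ^ 'n \<Rightarrow> real ^ 'n" where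
  "grad f x = (SOME D. GDERIV f x :> D)"

text \<open>GBPA run along a fixed history h of sampled arms (h t = arm sampled in round t, t \<ge> 1):
  estimated cumulative gain vector \<open>Ghat t\<close> after t rounds.\<close>
fun Ghat :: "(real ^ 'n::finite \<Rightarrow> real) \<Rightarrow> (nat \<Rightarrow> real ^ 'n) \<Rightarrow> (nat \<Rightarrow> 'n) \<Rightarrow> nat \<Rightarrow> real ^ 'n" where
  "Ghat Phi g h 0 = 0"
| "Ghat Phi g h (Suc t) =
     Ghat Phi g h t
     + (g (Suc t) $ h (Suc t) / grad Phi (Ghat Phi g h t) $ h (Suc t)) *\<^sub>R axis (h (Suc t)) 1"

definition pdist :: "(real ^ 'n::finite \<Rightarrow> real) \<Rightarrow> (nat \<Rightarrow> real ^ 'n) \<Rightarrow> (nat \<Rightarrow> 'n) \<Rightarrow> nat \<Rightarrow> real ^ 'n" where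
  "pdist Phi g h t = grad Phi (Ghat Phi g h (t - 1))"

definition hist_prob :: "(real ^ 'n::finite \<Rightarrow> real) \<Rightarrow> (nat \<Rightarrow> real ^ 'n) \<Rightarrow> nat \<Rightarrow> (nat \<Rightarrow> 'n) \<Rightarrow> real" where
  "hist_prob Phi g T h = (\<Prod>t=1..T. pdist Phi g h t $ h t)"

definition regret :: "(nat \<Rightarrow> real ^ 'n::finite) \<Rightarrow> nat \<Rightarrow> (nat \<Rightarrow> 'n) \<Rightarrow> real" where
  "regret g T h = Max (range (\<lambda>i. \<Sum>t=1..T. g t $ i - g t $ h t))"

definition expected_regret :: "(real ^ 'n::finite \<Rightarrow> real) \<Rightarrow> (nat \<Rightarrow> real ^ 'n) \<Rightarrow> nat \<Rightarrow> real" where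
  "expected_regret Phi g T =
     (\<Sum>h\<in>PiE {1..T} (\<lambda>_. UNIV). hist_prob Phi g T h * regret g T h)"

end

theory Submission
  imports Defs
begin

text \<open>
  The maximiser of \<open>\<langle>p, G\<rangle> - \<eta> S\<^sub>\<alpha>(p)\<close> over the simplex has the closed form
  \<open>p\<^sub>j = (c / (\<lambda> - G\<^sub>j))\<^bsup>1/(1-\<alpha>)\<^esup>\<close> with \<open>c = \<eta>\<alpha>/(1-\<alpha>)\<close> and a normalising multiplier \<open>\<lambda>\<close>.
  Sandwiching the increments of the potential between \<open>\<langle>p(G), G' - G\<rangle>\<close> and \<open>\<langle>p(G'), G' - G\<rangle>\<close>
  shows that \<open>\<Phi>\<close> is differentiable with gradient \<open>p\<close>, so GBPA samples from this maximiser.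

  The usual GBPA argument then applies to any potential whose gradient is a positive probability
  vector: the importance-weighted estimates are unbiased and \<open>\<Phi>\<close> dominates every coordinate,
  so the expected regret is at most \<open>\<Phi>(0)\<close> plus, per round, the expected Bregman divergence of one
  update. By concavity of \<open>x\<^sup>\<alpha>\<close>, \<open>\<Phi>(0) \<le> \<eta>(N\<^bsup>1-\<alpha>\<^esup> - 1)/(1-\<alpha>)\<close>. Lowering \<open>G\<^sub>j\<close> by \<open>u\<close> lowers
  \<open>p\<^sub>j\<close> by at most \<open>u p\<^sub>j\<^bsup>2-\<alpha>\<^esup>/(\<eta>\<alpha>)\<close>, so the divergence of one round is at most
  \<open>\<Sum>\<^sub>j p\<^sub>j\<^bsup>1-\<alpha>\<^esup>/(2\<eta>\<alpha>) \<le> N\<^sup>\<alpha>/(2\<eta>\<alpha>)\<close>.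
\<close>

section \<open>Power inequalities and gradients\<close>

lemma powr_le_tangent:
  fixes x p a :: real
  assumes "0 \<le> x" "0 < p" "0 < a" "a < 1"
  shows "x powr a \<le> p powr a + a * p powr (a - 1) * (x - p)"
proof (cases "x = 0")
  case True
  have "p powr (a - 1) * p = p powr a" using assms by (simp add: powr_diff)
  then show ?thesis using True assms by (simp add: algebra_simps)
next
  case False
  hence x: "x > 0" using assms by simp
  have "x powr a * p powr (1 - a) \<le> a * x + (1 - a) * p"
    using Youngs_inequality_0[of a "1 - a" x p] assms x by simp
  hence "x powr a * p powr (1 - a) * p powr (a - 1) \<le> (a * x + (1 - a) * p) * p powr (a - 1)"
    by (rule mult_right_mono) simp
  moreover have "p powr (1 - a) * p powr (a - 1) = 1" using assms by (simp flip: powr_add)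
  moreover have "p powr (a - 1) * p = p powr a" using assms by (simp add: powr_diff)
  ultimately show ?thesis by (simp add: algebra_simps)
qed

lemma tangent_le_powr_neg:
  fixes t g :: real
  assumes "0 < t" "0 \<le> g"
  shows "1 + g * (1 - t) \<le> t powr (-g)"
proof -
  have "g * ln t \<le> g * (t - 1)" using ln_le_minus_one[OF assms(1)] assms by (intro mult_left_mono)
  hence "1 + g * (1 - t) \<le> 1 + (- g * ln t)" by (simp add: algebra_simps)
  also have "\<dots> \<le> exp (- g * ln t)" by (rule exp_ge_add_one_self)
  also have "\<dots> = t powr (-g)" using assms by (simp add: powr_def)
  finally show ?thesis .
qed

lemma sum_powr_le_card_powr:
  fixes q :: "real ^ 'n::finite"
  assumes q: "q \<in> prob_simplex" and a: "0 < a" "a < 1"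
  shows "(\<Sum>j\<in>UNIV. q $ j powr a) \<le> real CARD('n) powr (1 - a)"
proof -
  define N where "N = real CARD('n)"
  have N: "N > 0" unfolding N_def by simp
  have q0: "0 \<le> q $ j" for j using q unfolding prob_simplex_def by auto
  have qs: "(\<Sum>j\<in>UNIV. q $ j) = 1" using q unfolding prob_simplex_def by auto
  have "(\<Sum>j\<in>UNIV. q $ j powr a)
      \<le> (\<Sum>j\<in>UNIV. (1/N) powr a + a * (1/N) powr (a - 1) * (q $ j - 1/N))"
    by (intro sum_mono powr_le_tangent) (use q0 N a in auto)
  also have "\<dots> = N * (1/N) powr a + a * (1/N) powr (a - 1) * ((\<Sum>j\<in>UNIV. q $ j) - N * (1/N))"
    unfolding N_def by (simp add: sum.distrib sum_subtractf flip: sum_distrib_left)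
  also have "\<dots> = N powr (1 - a)" using qs N by (simp add: powr_divide powr_diff)
  finally show ?thesis unfolding N_def .
qed

lemma grad_eqI:
  fixes f :: "real ^ 'n::finite \<Rightarrow> real"
  assumes "GDERIV f x :> D"
  shows "grad f x = D"
proof -
  have "D' = D" if "GDERIV f x :> D'" for D'
  proof -
    have "(\<lambda>h. inner h D') = (\<lambda>h. inner h D)"
      using has_derivative_unique that assms unfolding gderiv_def by blast
    hence "inner (D' - D) D' = inner (D' - D) D" by metis
    hence "inner (D' - D) (D' - D) = 0" by (simp add: inner_diff_right)
    thus ?thesis by simp
  qed
  thus ?thesis unfolding grad_def using assms by blast
qed

lemma has_derivative_sandwich:
  fixes f :: "'a::real_inner \<Rightarrow> real"
  assumes lower: "\<And>y. inner (p x) (y - x) \<le> f y - f x"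
    and upper: "\<And>y. f y - f x \<le> inner (p y) (y - x)"
    and cont: "(p \<longlongrightarrow> p x) (at x)"
  shows "(f has_derivative (\<lambda>h. inner h (p x))) (at x)"
  unfolding has_derivative_iff_norm
proof
  show "bounded_linear (\<lambda>h. inner h (p x))" by (rule bounded_linear_inner_left)
  have "norm (f y - f x - inner (y - x) (p x)) / norm (y - x) \<le> dist (p y) (p x)" for y
  proof (cases "y = x")
    case False
    have lo: "0 \<le> f y - f x - inner (y - x) (p x)"
      using lower[of y] by (simp add: inner_commute)
    have "f y - f x - inner (y - x) (p x) \<le> inner (p y - p x) (y - x)"
      using upper[of y] inner_commute[of "y - x" "p x"] inner_diff_left[of "p y" "p x" "y - x"]
      by linarith
    also have "\<dots> \<le> norm (p y - p x) * norm (y - x)" by (rule norm_cauchy_schwarz)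
    finally show ?thesis using lo False by (simp add: dist_norm divide_le_eq)
  qed simp
  then show "((\<lambda>y. norm (f y - f x - inner (y - x) (p x)) / norm (y - x)) \<longlongrightarrow> 0) (at x)"
    by (intro metric_tendsto_imp_tendsto[OF cont] always_eventually) simp
qed

section \<open>Gradient-based prediction with an arbitrary potential\<close>

lemma Ghat_cong:
  "(\<And>s. 1 \<le> s \<Longrightarrow> s \<le> t \<Longrightarrow> h s = h' s) \<Longrightarrow> Ghat Phi g h t = Ghat Phi g h' t"
  by (induction t) auto

lemma Ghat_fun_upd_Suc: "Ghat Phi g (h(Suc T := j)) T = Ghat Phi g h T"
  by (rule Ghat_cong) auto

lemma hist_prob_fun_upd_Suc:
  "hist_prob Phi g (Suc T) (h(Suc T := j)) = hist_prob Phi g T h * grad Phi (Ghat Phi g h T) $ j"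
proof -
  have "pdist Phi g (h(Suc T := j)) t $ (h(Suc T := j)) t = pdist Phi g h t $ h t"
    if "t \<in> {1..T}" for t
  proof -
    have "Ghat Phi g (h(Suc T := j)) (t - 1) = Ghat Phi g h (t - 1)"
      by (rule Ghat_cong) (use that in auto)
    then show ?thesis using that unfolding pdist_def by simp
  qed
  then show ?thesis unfolding hist_prob_def by (simp add: pdist_def Ghat_fun_upd_Suc)
qed

definition hist_expectation ::
  "(real ^ 'n::finite \<Rightarrow> real) \<Rightarrow> (nat \<Rightarrow> real ^ 'n) \<Rightarrow> nat \<Rightarrow> ((nat \<Rightarrow> 'n) \<Rightarrow> real) \<Rightarrow> real"
  where "hist_expectation Phi g T X = (\<Sum>h\<in>PiE {1..T} (\<lambda>_. UNIV). hist_prob Phi g T h * X h)"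

lemma hist_expectation_0: "hist_expectation Phi g 0 X = X (\<lambda>_. undefined)"
  unfolding hist_expectation_def hist_prob_def by simp

lemma hist_expectation_Suc:
  "hist_expectation Phi g (Suc T) X =
     hist_expectation Phi g T (\<lambda>h. \<Sum>j\<in>UNIV. grad Phi (Ghat Phi g h T) $ j * X (h(Suc T := j)))"
proof -
  let ?H = "PiE {1..T} (\<lambda>_. UNIV :: 'a set)"
  have "{1..Suc T} = insert (Suc T) {1..T}" by auto
  then have histories: "PiE {1..Suc T} (\<lambda>_. UNIV) = (\<lambda>(j, h). h(Suc T := j)) ` (UNIV \<times> ?H)"
    by (simp add: PiE_insert_eq)
  have inj: "inj_on (\<lambda>(j, h). h(Suc T := j)) (UNIV \<times> ?H)"
    by (rule inj_combinator) auto
  have "hist_expectation Phi g (Suc T) X = (\<Sum>(j, h)\<in>UNIV \<times> ?H.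
        hist_prob Phi g (Suc T) (h(Suc T := j)) * X (h(Suc T := j)))"
    unfolding hist_expectation_def histories by (subst sum.reindex[OF inj]) (simp add: case_prod_beta')
  also have "\<dots> = (\<Sum>j\<in>UNIV. \<Sum>h\<in>?H. hist_prob Phi g (Suc T) (h(Suc T := j)) * X (h(Suc T := j)))"
    by (rule sum.cartesian_product[symmetric])
  also have "\<dots> = (\<Sum>h\<in>?H. \<Sum>j\<in>UNIV. hist_prob Phi g (Suc T) (h(Suc T := j)) * X (h(Suc T := j)))"
    by (rule sum.swap)
  finally show ?thesis
    unfolding hist_expectation_def hist_prob_fun_upd_Suc
    by (simp add: sum_distrib_left mult.assoc)
qed

lemma hist_expectation_add:
  "hist_expectation Phi g T (\<lambda>h. X h + Y h) = hist_expectation Phi g T X + hist_expectation Phi g T Y"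
  unfolding hist_expectation_def by (simp add: distrib_left sum.distrib)

lemma hist_expectation_diff:
  "hist_expectation Phi g T (\<lambda>h. X h - Y h) = hist_expectation Phi g T X - hist_expectation Phi g T Y"
  unfolding hist_expectation_def by (simp add: right_diff_distrib sum_subtractf)

lemma regret_eq:
  "regret g T h = (MAX i. \<Sum>t=1..T. g t $ i) - (\<Sum>t=1..T. g t $ h t)"
proof -
  have "range (\<lambda>i. \<Sum>t=1..T. g t $ i - g t $ h t)
      = (\<lambda>x. x - (\<Sum>t=1..T. g t $ h t)) ` range (\<lambda>i. \<Sum>t=1..T. g t $ i)"
    by (auto simp: sum_subtractf)
  then show ?thesis
    unfolding regret_def by (simp add: mono_Max_commute[symmetric] mono_def)
qed

text \<open>Since \<open>\<langle>\<nabla>\<Phi>(G), (l\<^sub>j / p\<^sub>j) e\<^sub>j\<rangle> = l\<^sub>j\<close>, the \<open>j\<close>-th summand is the Bregman divergence of \<open>\<Phi>\<close>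
  between \<open>G\<close> and the GBPA update after sampling arm \<open>j\<close>.\<close>
definition expected_bregman :: "(real ^ 'n::finite \<Rightarrow> real) \<Rightarrow> real ^ 'n \<Rightarrow> real ^ 'n \<Rightarrow> real" where
  "expected_bregman Phi G l =
     (\<Sum>j\<in>UNIV. grad Phi G $ j * (Phi (G + (l $ j / grad Phi G $ j) *\<^sub>R axis j 1) - Phi G - l $ j))"

locale gbpa =
  fixes Phi :: "real ^ 'n::finite \<Rightarrow> real"
  assumes grad_pos: "0 < grad Phi G $ j"
    and grad_sum: "(\<Sum>j\<in>UNIV. grad Phi G $ j) = 1"
begin

lemma hist_expectation_mono:
  "(\<And>h. X h \<le> Y h) \<Longrightarrow> hist_expectation Phi g T X \<le> hist_expectation Phi g T Y"
  unfolding hist_expectation_def hist_prob_def pdist_def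
  by (intro sum_mono mult_left_mono prod_nonneg) (auto intro: less_imp_le grad_pos)

lemma hist_expectation_const: "hist_expectation Phi g T (\<lambda>_. k) = k"
  by (induction T) (simp_all add: hist_expectation_0 hist_expectation_Suc grad_sum flip: sum_distrib_right)

lemma hist_expectation_Ghat:
  "hist_expectation Phi g T (\<lambda>h. Ghat Phi g h T $ i) = (\<Sum>t=1..T. g t $ i)"
proof (induction T)
  case (Suc T)
  have "(\<Sum>j\<in>UNIV. grad Phi G $ j * (G + (g (Suc T) $ j / grad Phi G $ j) *\<^sub>R axis j 1) $ i)
      = G $ i + g (Suc T) $ i" for G
  proof -
    have "grad Phi G $ j * (G + (g (Suc T) $ j / grad Phi G $ j) *\<^sub>R axis j 1) $ i
        = grad Phi G $ j * G $ i + (if j = i then g (Suc T) $ i else 0)" for j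
      using grad_pos[of G j] by (auto simp: axis_def field_simps)
    then show ?thesis by (simp add: sum.distrib grad_sum flip: sum_distrib_right)
  qed
  then have "hist_expectation Phi g (Suc T) (\<lambda>h. Ghat Phi g h (Suc T) $ i)
      = hist_expectation Phi g T (\<lambda>h. Ghat Phi g h T $ i + g (Suc T) $ i)"
    by (simp add: hist_expectation_Suc Ghat_fun_upd_Suc)
  then show ?case by (simp add: hist_expectation_add hist_expectation_const Suc)
qed (simp add: hist_expectation_0)

lemma hist_expectation_potential_le:
  assumes bregman: "\<And>G l. (\<And>j. -1 \<le> l $ j \<and> l $ j \<le> 0) \<Longrightarrow> expected_bregman Phi G l \<le> B"
    and losses: "\<forall>t\<in>{1..T}. \<forall>i. -1 \<le> g t $ i \<and> g t $ i \<le> 0"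
  shows "hist_expectation Phi g T (\<lambda>h. Phi (Ghat Phi g h T) - (\<Sum>s=1..T. g s $ h s))
           \<le> Phi 0 + real T * B"
  using losses
proof (induction T)
  case (Suc T)
  let ?Psi = "\<lambda>h. Phi (Ghat Phi g h T) - (\<Sum>s=1..T. g s $ h s)"
  have step: "(\<Sum>j\<in>UNIV. grad Phi (Ghat Phi g h T) $ j *
       (Phi (Ghat Phi g (h(Suc T := j)) (Suc T)) - (\<Sum>s=1..Suc T. g s $ (h(Suc T := j)) s)))
      = ?Psi h + expected_bregman Phi (Ghat Phi g h T) (g (Suc T))" for h
  proof -
    define G where "G = Ghat Phi g h T"
    define p where "p = grad Phi G"
    have "(\<Sum>s=1..Suc T. g s $ (h(Suc T := j)) s) = (\<Sum>s=1..T. g s $ h s) + g (Suc T) $ j" for j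
      by (simp add: sum.cl_ivl_Suc)
    then have "p $ j * (Phi (Ghat Phi g (h(Suc T := j)) (Suc T)) - (\<Sum>s=1..Suc T. g s $ (h(Suc T := j)) s))
        = p $ j * ?Psi h
          + p $ j * (Phi (G + (g (Suc T) $ j / p $ j) *\<^sub>R axis j 1) - Phi G - g (Suc T) $ j)" for j
      by (simp add: G_def p_def Ghat_fun_upd_Suc algebra_simps)
    then show ?thesis
      by (simp add: sum.distrib grad_sum expected_bregman_def G_def p_def flip: sum_distrib_right)
  qed
  have "hist_expectation Phi g (Suc T) (\<lambda>h. Phi (Ghat Phi g h (Suc T)) - (\<Sum>s=1..Suc T. g s $ h s))
      = hist_expectation Phi g T (\<lambda>h. ?Psi h + expected_bregman Phi (Ghat Phi g h T) (g (Suc T)))"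
    by (simp only: hist_expectation_Suc step)
  also have "\<dots> \<le> hist_expectation Phi g T (\<lambda>h. ?Psi h + B)"
    using Suc.prems by (intro hist_expectation_mono add_left_mono bregman) auto
  also have "\<dots> = hist_expectation Phi g T ?Psi + B"
    by (simp only: hist_expectation_add hist_expectation_const)
  also have "\<dots> \<le> Phi 0 + real (Suc T) * B"
    using Suc by (simp add: algebra_simps)
  finally show ?case .
qed (simp add: hist_expectation_0)

theorem expected_regret_le:
  assumes dominates: "\<And>G i. G $ i \<le> Phi G"
    and bregman: "\<And>G l. (\<And>j. -1 \<le> l $ j \<and> l $ j \<le> 0) \<Longrightarrow> expected_bregman Phi G l \<le> B"
    and losses: "\<forall>t\<in>{1..T}. \<forall>i. -1 \<le> g t $ i \<and> g t $ i \<le> 0"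
  shows "expected_regret Phi g T \<le> Phi 0 + real T * B"
proof -
  let ?E = "hist_expectation Phi g T"
  let ?M = "MAX i. \<Sum>t=1..T. g t $ i"
  let ?Phi = "\<lambda>h. Phi (Ghat Phi g h T)"
  let ?Psi = "\<lambda>h. Phi (Ghat Phi g h T) - (\<Sum>s=1..T. g s $ h s)"
  have "(\<Sum>t=1..T. g t $ i) \<le> ?E ?Phi" for i
  proof -
    have "(\<Sum>t=1..T. g t $ i) = ?E (\<lambda>h. Ghat Phi g h T $ i)"
      by (rule hist_expectation_Ghat[symmetric])
    also have "\<dots> \<le> ?E ?Phi"
      by (rule hist_expectation_mono, rule dominates)
    finally show ?thesis .
  qed
  then have max_le: "?M \<le> ?E ?Phi" by simp
  have "regret g T = (\<lambda>h. (?M - ?Phi h) + ?Psi h)"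
    by (simp add: regret_eq fun_eq_iff)
  then have "expected_regret Phi g T = ?E (\<lambda>h. (?M - ?Phi h) + ?Psi h)"
    unfolding expected_regret_def hist_expectation_def by simp
  also have "\<dots> = ?M - ?E ?Phi + ?E ?Psi"
    by (simp only: hist_expectation_add hist_expectation_diff hist_expectation_const)
  also have "\<dots> \<le> Phi 0 + real T * B"
  proof -
    have "?E ?Psi \<le> Phi 0 + real T * B"
      by (rule hist_expectation_potential_le[OF _ losses]) (fact bregman)
    then show ?thesis using max_le by linarith
  qed
  finally show ?thesis .
qed
end

section \<open>The Tsallis-regularised potential\<close>

locale tsallis_potential =
  fixes \<eta> \<alpha> :: real
  assumes eta_pos: "0 < \<eta>" and alpha_pos: "0 < \<alpha>" and alpha_less_1: "\<alpha> < 1"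
begin

definition c :: real where "c = \<eta> * \<alpha> / (1 - \<alpha>)"

text \<open>The first-order condition \<open>G\<^sub>j + c p\<^sub>j\<^bsup>\<alpha>-1\<^esup> = \<lambda>\<close> for maximising
  \<open>\<langle>p, G\<rangle> - \<eta> S\<^sub>\<alpha>(p)\<close> solved for \<open>p\<^sub>j\<close>; \<open>\<lambda>\<close> is the multiplier of the constraint \<open>\<Sum>\<^sub>j p\<^sub>j = 1\<close>.\<close>
definition weight :: "real \<Rightarrow> real ^ 'n::finite \<Rightarrow> 'n \<Rightarrow> real" where
  "weight l G j = (c / (l - G $ j)) powr (1 / (1 - \<alpha>))"

definition normalizes :: "real \<Rightarrow> real ^ 'n::finite \<Rightarrow> bool" where
  "normalizes l G \<longleftrightarrow> (\<forall>j. G $ j < l) \<and> (\<Sum>j\<in>UNIV. weight l G j) = 1"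

definition multiplier :: "real ^ 'n::finite \<Rightarrow> real" where
  "multiplier G = (SOME l. normalizes l G)"

definition maximizer :: "real ^ 'n::finite \<Rightarrow> real ^ 'n" where
  "maximizer G = (\<chi> j. weight (multiplier G) G j)"

definition objective :: "real ^ 'n::finite \<Rightarrow> real ^ 'n \<Rightarrow> real" where
  "objective G q = inner q G - \<eta> * tsallis \<alpha> q"

lemma c_pos: "0 < c"
  using eta_pos alpha_pos alpha_less_1 unfolding c_def by simp

lemma weight_pos: "G $ j < l \<Longrightarrow> 0 < weight l G j"
  unfolding weight_def using c_pos by simp

lemma normalizes_diff_le:
  assumes "normalizes l1 G1" "normalizes l2 G2" "\<And>j. G1 $ j - G2 $ j \<le> d"
  shows "l1 - l2 \<le> d"
proof (rule ccontr)
  assume "\<not> l1 - l2 \<le> d"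
  then have "weight l1 G1 j < weight l2 G2 j" for j
  proof -
    have "0 < l2 - G2 $ j" "l2 - G2 $ j < l1 - G1 $ j"
      using \<open>\<not> l1 - l2 \<le> d\<close> assms(1,2) assms(3)[of j] unfolding normalizes_def by auto
    then show ?thesis unfolding weight_def using c_pos alpha_less_1
      by (intro powr_less_mono2 divide_strict_left_mono) auto
  qed
  then have "(\<Sum>j\<in>UNIV. weight l1 G1 j) < (\<Sum>j\<in>UNIV. weight l2 G2 j)"
    by (intro sum_strict_mono) auto
  with assms(1,2) show False unfolding normalizes_def by simp
qed

lemma weight_le_inverse_card:
  fixes G :: "real ^ 'n::finite"
  assumes "G $ j \<le> M"
  shows "weight (M + c * real CARD('n) powr (1 - \<alpha>)) G j \<le> 1 / real CARD('n)"
proof -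
  define N where "N = real CARD('n)"
  have N: "1 \<le> N" unfolding N_def by (simp add: Suc_le_eq)
  have pos: "0 < c * N powr (1 - \<alpha>)" using c_pos N by simp
  have "c / (M + c * N powr (1 - \<alpha>) - G $ j) \<le> c / (c * N powr (1 - \<alpha>))"
    using assms pos c_pos by (intro divide_left_mono) auto
  also have "\<dots> = N powr (\<alpha> - 1)"
    using c_pos N by (simp add: powr_minus_divide[symmetric] powr_minus)
  finally have "weight (M + c * N powr (1 - \<alpha>)) G j \<le> (N powr (\<alpha> - 1)) powr (1 / (1 - \<alpha>))"
    unfolding weight_def using assms pos c_pos alpha_less_1 by (intro powr_mono2) auto
  also have "\<dots> = 1 / N"
  proof -
    have "(\<alpha> - 1) / (1 - \<alpha>) = -1" using alpha_less_1 by (simp add: field_simps)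
    then show ?thesis using N by (simp add: powr_powr powr_minus_divide)
  qed
  finally show ?thesis unfolding N_def .
qed

text \<open>By the intermediate value theorem between \<open>max G + c\<close>, where the largest weight is \<open>1\<close>,
  and \<open>max G + c N\<^bsup>1-\<alpha>\<^esup>\<close>, where all weights are at most \<open>1/N\<close>.\<close>
lemma ex_normalizes: "\<exists>l. normalizes l (G :: real ^ 'n::finite)"
proof -
  define M where "M = Max (range (\<lambda>j. G $ j))"
  have "M \<in> range (\<lambda>j. G $ j)" unfolding M_def by (intro Max_in) auto
  then obtain k where k: "G $ k = M" by auto
  have le_M: "G $ j \<le> M" for j unfolding M_def by (intro Max_ge) auto
  define f where "f l = (\<Sum>j\<in>UNIV. weight l G j)" for l
  define l1 where "l1 = M + c"
  define l2 where "l2 = M + c * real CARD('n) powr (1 - \<alpha>)"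
  have "l1 \<le> l2"
    unfolding l1_def l2_def using c_pos alpha_less_1 by (simp add: ge_one_powr_ge_zero Suc_le_eq)
  moreover have "1 \<le> f l1"
  proof -
    have "weight l1 G k = 1" unfolding weight_def l1_def k using c_pos by simp
    moreover have "weight l1 G k \<le> f l1" unfolding f_def
      by (rule member_le_sum) (auto simp: weight_def)
    ultimately show ?thesis by simp
  qed
  moreover have "f l2 \<le> 1"
    using sum_bounded_above[of UNIV "weight l2 G" "1 / real CARD('n)"]
      weight_le_inverse_card[OF le_M] unfolding f_def l2_def by simp
  moreover have "isCont f x" if "l1 \<le> x" for x
  proof -
    have "G $ j < x" for j using le_M[of j] that c_pos unfolding l1_def by simp
    then show ?thesis unfolding f_def weight_def using c_pos by (intro continuous_intros) auto
  qed
  ultimately obtain l where l: "l1 \<le> l" "f l = 1"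
    using IVT2[of f l2 1 l1] by auto
  have "G $ j < l" for j using le_M[of j] l c_pos unfolding l1_def by simp
  with l show ?thesis unfolding normalizes_def f_def by auto
qed

lemma normalizes_multiplier: "normalizes (multiplier G) G"
  unfolding multiplier_def using ex_normalizes by (rule someI_ex)

lemma less_multiplier: "G $ j < multiplier G"
  using normalizes_multiplier unfolding normalizes_def by auto

lemma maximizer_pos: "0 < maximizer G $ j"
  unfolding maximizer_def by (simp add: weight_pos less_multiplier)

lemma sum_maximizer: "(\<Sum>j\<in>UNIV. maximizer G $ j) = 1"
  unfolding maximizer_def using normalizes_multiplier[of G] unfolding normalizes_def by simp

lemma maximizer_in_prob_simplex: "maximizer G \<in> prob_simplex"
  unfolding prob_simplex_def using maximizer_pos sum_maximizer by (auto intro: less_imp_le)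

lemma maximizer_powr: "maximizer G $ j powr (\<alpha> - 1) = (multiplier G - G $ j) / c"
proof -
  have "1 / (1 - \<alpha>) * (\<alpha> - 1) = -1" using alpha_less_1 by (simp add: field_simps)
  moreover have "0 < c / (multiplier G - G $ j)" using c_pos less_multiplier[of G j] by simp
  ultimately show ?thesis unfolding maximizer_def weight_def using c_pos
    by (simp add: powr_powr powr_minus divide_inverse)
qed

lemma objective_eq:
  "objective G q = (\<Sum>j\<in>UNIV. q $ j * G $ j + \<eta> / (1 - \<alpha>) * q $ j powr \<alpha>) - \<eta> / (1 - \<alpha>)"
proof -
  have "\<eta> * ((1 - (\<Sum>j\<in>UNIV. q $ j powr \<alpha>)) / (1 - \<alpha>))
      = \<eta> / (1 - \<alpha>) - \<eta> / (1 - \<alpha>) * (\<Sum>j\<in>UNIV. q $ j powr \<alpha>)"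
    by (simp add: diff_divide_distrib right_diff_distrib)
  then show ?thesis
    unfolding objective_def tsallis_def inner_vec_def
    by (simp add: mult.commute sum.distrib sum_distrib_left)
qed

text \<open>Concavity of \<open>x\<^sup>\<alpha>\<close> at \<open>p = maximizer G\<close>, where \<open>\<eta>/(1-\<alpha>) \<alpha> p\<^sub>j\<^bsup>\<alpha>-1\<^esup> = \<lambda> - G\<^sub>j\<close>:
  the multiplier terms cancel because \<open>q\<close> and \<open>p\<close> both sum to \<open>1\<close>.\<close>
lemma objective_le_maximizer:
  assumes q: "q \<in> prob_simplex"
  shows "objective G q \<le> objective G (maximizer G)"
proof -
  define p where "p = maximizer G"
  define l where "l = multiplier G"
  define e where "e = \<eta> / (1 - \<alpha>)"
  have e: "0 < e" using eta_pos alpha_less_1 unfolding e_def by simp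
  have q0: "0 \<le> q $ j" for j using q unfolding prob_simplex_def by auto
  have qs: "(\<Sum>j\<in>UNIV. q $ j) = 1" using q unfolding prob_simplex_def by auto
  have "q $ j * G $ j + e * q $ j powr \<alpha> \<le> p $ j * G $ j + e * p $ j powr \<alpha> + l * (q $ j - p $ j)"
    for j
  proof -
    have "e * q $ j powr \<alpha> \<le> e * (p $ j powr \<alpha> + \<alpha> * p $ j powr (\<alpha> - 1) * (q $ j - p $ j))"
      using powr_le_tangent[of "q $ j" "p $ j" \<alpha>] q0 maximizer_pos alpha_pos alpha_less_1 e
      unfolding p_def by auto
    also have "\<dots> = e * p $ j powr \<alpha> + (e * \<alpha> * p $ j powr (\<alpha> - 1)) * (q $ j - p $ j)"
      by (simp add: algebra_simps)
    also have "e * \<alpha> * p $ j powr (\<alpha> - 1) = l - G $ j"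
    proof -
      have "e * \<alpha> = c" unfolding e_def c_def by simp
      then show ?thesis using maximizer_powr[of G j] c_pos unfolding p_def l_def by simp
    qed
    finally show ?thesis by (simp add: algebra_simps)
  qed
  then have "(\<Sum>j\<in>UNIV. q $ j * G $ j + e * q $ j powr \<alpha>)
      \<le> (\<Sum>j\<in>UNIV. p $ j * G $ j + e * p $ j powr \<alpha> + l * (q $ j - p $ j))"
    by (intro sum_mono)
  also have "\<dots> = (\<Sum>j\<in>UNIV. p $ j * G $ j + e * p $ j powr \<alpha>)"
    using qs sum_maximizer[of G] unfolding p_def
    by (simp add: sum.distrib sum_subtractf flip: sum_distrib_left)
  finally show ?thesis unfolding objective_eq e_def p_def by simp
qed

lemma PhiT_eq: "PhiT \<eta> \<alpha> G = objective G (maximizer G)"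
  unfolding PhiT_def objective_def[symmetric]
  by (rule cSup_eq_maximum) (use maximizer_in_prob_simplex objective_le_maximizer in auto)

lemma objective_le_PhiT:
  assumes "q \<in> prob_simplex"
  shows "objective G q \<le> PhiT \<eta> \<alpha> G"
  using objective_le_maximizer[OF assms, of G] PhiT_eq[of G] by simp

lemma inner_maximizer_le_PhiT_diff:
  "inner (maximizer G) (G' - G) \<le> PhiT \<eta> \<alpha> G' - PhiT \<eta> \<alpha> G"
proof -
  have "objective G' (maximizer G) = objective G (maximizer G) + inner (maximizer G) (G' - G)"
    unfolding objective_def by (simp add: inner_diff_right)
  then show ?thesis
    using objective_le_PhiT[OF maximizer_in_prob_simplex, of G' G] PhiT_eq[of G] by simp
qed

lemma abs_multiplier_diff_le: "\<bar>multiplier G' - multiplier G\<bar> \<le> norm (G' - G)"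
proof -
  have "G' $ j - G $ j \<le> norm (G' - G) \<and> G $ j - G' $ j \<le> norm (G' - G)" for j
    using component_le_norm_cart[of "G' - G" j] by (simp add: abs_le_iff)
  then have "multiplier G' - multiplier G \<le> norm (G' - G)" "multiplier G - multiplier G' \<le> norm (G' - G)"
    by (auto intro: normalizes_diff_le[OF normalizes_multiplier normalizes_multiplier])
  then show ?thesis by linarith
qed

lemma maximizer_tendsto: "(maximizer \<longlongrightarrow> maximizer G) (at G)"
proof -
  have "(multiplier \<longlongrightarrow> multiplier G) (at G)"
    by (rule metric_tendsto_imp_tendsto[OF tendsto_ident_at])
      (auto simp: dist_norm intro!: always_eventually abs_multiplier_diff_le)
  then have "((\<lambda>y. weight (multiplier y) y j) \<longlongrightarrow> weight (multiplier G) G j) (at G)" for j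
    using less_multiplier[of G j] c_pos unfolding weight_def
    by (intro tendsto_intros tendsto_ident_at) auto
  then show ?thesis unfolding maximizer_def by (rule tendsto_vec_lambda)
qed

lemma PhiT_has_derivative: "(PhiT \<eta> \<alpha> has_derivative (\<lambda>h. inner h (maximizer G))) (at G)"
proof (rule has_derivative_sandwich[OF inner_maximizer_le_PhiT_diff _ maximizer_tendsto])
  show "PhiT \<eta> \<alpha> y - PhiT \<eta> \<alpha> G \<le> inner (maximizer y) (y - G)" for y
    using inner_maximizer_le_PhiT_diff[of y G] by (simp add: inner_diff_right)
qed

lemma grad_PhiT: "grad (PhiT \<eta> \<alpha>) G = maximizer G"
  by (rule grad_eqI) (simp add: gderiv_def PhiT_has_derivative)

lemma maximizer_decrease_le:
  assumes "0 \<le> v"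
  shows "maximizer G $ j - maximizer (G - v *\<^sub>R axis j 1) $ j
           \<le> v * maximizer G $ j powr (2 - \<alpha>) / (\<eta> * \<alpha>)"
proof -
  define G' where "G' = G - v *\<^sub>R axis j 1"
  define p0 where "p0 = maximizer G $ j"
  define p where "p = maximizer G' $ j"
  have p0: "0 < p0" unfolding p0_def by (rule maximizer_pos)
  have p: "0 < p" unfolding p_def by (rule maximizer_pos)
  have "multiplier G' - multiplier G \<le> 0"
    by (rule normalizes_diff_le[OF normalizes_multiplier normalizes_multiplier])
      (use assms in \<open>auto simp: G'_def axis_def\<close>)
  then have "p powr (\<alpha> - 1) - p0 powr (\<alpha> - 1) \<le> v / c"
    using maximizer_powr[of G' j] maximizer_powr[of G j] c_pos
    by (simp add: G'_def p_def p0_def axis_def diff_divide_distrib[symmetric] divide_right_mono)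
  moreover have "p0 powr (\<alpha> - 1) + p0 powr (\<alpha> - 1) * ((1 - \<alpha>) * (1 - p / p0)) \<le> p powr (\<alpha> - 1)"
  proof -
    have "1 + (1 - \<alpha>) * (1 - p / p0) \<le> (p / p0) powr (- (1 - \<alpha>))"
      by (rule tangent_le_powr_neg) (use p p0 alpha_less_1 in auto)
    also have "\<dots> = p powr (\<alpha> - 1) / p0 powr (\<alpha> - 1)"
      using p p0 by (simp add: powr_divide)
    finally show ?thesis using p0 by (simp add: field_simps)
  qed
  ultimately have "p0 powr (\<alpha> - 1) * ((1 - \<alpha>) * (1 - p / p0)) \<le> v / c" by linarith
  moreover have "p0 powr (\<alpha> - 1) * ((1 - \<alpha>) * (1 - p / p0)) = (1 - \<alpha>) * (p0 - p) / p0 powr (2 - \<alpha>)"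
  proof -
    have "p0 powr (\<alpha> - 1) = p0 / p0 powr (2 - \<alpha>)"
      using p0 powr_diff[of p0 1 "2 - \<alpha>"] by simp
    then show ?thesis using p0 by (simp add: field_simps)
  qed
  ultimately have "(1 - \<alpha>) * (p0 - p) / p0 powr (2 - \<alpha>) \<le> v / c" by simp
  then have "c * (1 - \<alpha>) * (p0 - p) \<le> v * p0 powr (2 - \<alpha>)"
    using p0 c_pos by (simp add: field_simps)
  moreover have "c * (1 - \<alpha>) = \<eta> * \<alpha>" unfolding c_def using alpha_less_1 by simp
  ultimately have "\<eta> * \<alpha> * (p0 - p) \<le> v * p0 powr (2 - \<alpha>)" by simp
  then have "p0 - p \<le> v * p0 powr (2 - \<alpha>) / (\<eta> * \<alpha>)"
    using eta_pos alpha_pos by (simp add: field_simps)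
  then show ?thesis unfolding p0_def p_def G'_def .
qed

lemma has_real_derivative_PhiT_axis:
  "((\<lambda>v. PhiT \<eta> \<alpha> (G - v *\<^sub>R axis j 1)) has_real_derivative
      - maximizer (G - v *\<^sub>R axis j 1) $ j) (at v)"
proof -
  have "((\<lambda>v. G - v *\<^sub>R axis j 1) has_derivative (\<lambda>x. - (x *\<^sub>R axis j 1))) (at v)"
    by (auto intro!: derivative_eq_intros)
  from has_derivative_compose[OF this PhiT_has_derivative] show ?thesis
    unfolding has_field_derivative_def by (rule has_derivative_eq_rhs) (auto simp: inner_axis')
qed

text \<open>By \<open>maximizer_decrease_le\<close> the derivative \<open>-p\<^sub>j(G - v e\<^sub>j)\<close> of the left-hand side
  exceeds \<open>-p\<^sub>j(G)\<close> by at most \<open>v p\<^sub>j\<^bsup>2-\<alpha>\<^esup>/(\<eta>\<alpha>)\<close>.\<close>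
lemma PhiT_axis_decrease_le:
  assumes u: "0 \<le> u"
  shows "PhiT \<eta> \<alpha> (G - u *\<^sub>R axis j 1) - PhiT \<eta> \<alpha> G + u * maximizer G $ j
           \<le> maximizer G $ j powr (2 - \<alpha>) / (\<eta> * \<alpha>) * u\<^sup>2 / 2"
proof -
  define p where "p = maximizer G $ j"
  define L where "L = p powr (2 - \<alpha>) / (\<eta> * \<alpha>)"
  define r where "r v = PhiT \<eta> \<alpha> (G - v *\<^sub>R axis j 1) + v * p - L * v\<^sup>2 / 2" for v
  have "r u \<le> r 0"
  proof (rule DERIV_nonpos_imp_nonincreasing[OF u])
    fix x assume x: "0 \<le> x" "x \<le> u"
    have "DERIV r x :> - maximizer (G - x *\<^sub>R axis j 1) $ j + p - L * x"
      unfolding r_def by (auto intro!: derivative_eq_intros has_real_derivative_PhiT_axis)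
    moreover have "- maximizer (G - x *\<^sub>R axis j 1) $ j + p - L * x \<le> 0"
      using maximizer_decrease_le[OF x(1), of G j] unfolding L_def p_def by (simp add: field_simps)
    ultimately show "\<exists>y. DERIV r x :> y \<and> y \<le> 0" by blast
  qed
  then show ?thesis unfolding r_def L_def p_def by (simp add: field_simps)
qed

lemma bregman_term_PhiT_le:
  assumes x: "-1 \<le> x" "x \<le> 0"
  shows "maximizer G $ j * (PhiT \<eta> \<alpha> (G + (x / maximizer G $ j) *\<^sub>R axis j 1) - PhiT \<eta> \<alpha> G - x)
           \<le> maximizer G $ j powr (1 - \<alpha>) / (2 * \<eta> * \<alpha>)"
proof -
  define p where "p = maximizer G $ j"
  define u where "u = - x / p"
  have p: "0 < p" unfolding p_def by (rule maximizer_pos)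
  have u: "0 \<le> u" unfolding u_def using x p by (simp add: divide_nonpos_pos)
  have "PhiT \<eta> \<alpha> (G + (x / p) *\<^sub>R axis j 1) - PhiT \<eta> \<alpha> G - x
      \<le> p powr (2 - \<alpha>) / (\<eta> * \<alpha>) * u\<^sup>2 / 2"
    using PhiT_axis_decrease_le[OF u, of G j] p unfolding u_def p_def by simp
  then have "p * (PhiT \<eta> \<alpha> (G + (x / p) *\<^sub>R axis j 1) - PhiT \<eta> \<alpha> G - x)
      \<le> p * (p powr (2 - \<alpha>) / (\<eta> * \<alpha>) * u\<^sup>2 / 2)"
    using p by (intro mult_left_mono) auto
  also have "\<dots> = x\<^sup>2 * p powr (1 - \<alpha>) / (2 * \<eta> * \<alpha>)"
  proof -
    have "p powr (2 - \<alpha>) = p * p powr (1 - \<alpha>)"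
      using p powr_add[of p 1 "1 - \<alpha>"] by simp
    then show ?thesis unfolding u_def using p by (simp add: field_simps power2_eq_square)
  qed
  also have "\<dots> \<le> p powr (1 - \<alpha>) / (2 * \<eta> * \<alpha>)"
  proof -
    have "x\<^sup>2 \<le> 1" using x by (simp add: abs_le_iff abs_square_le_1)
    then show ?thesis using eta_pos alpha_pos by (intro divide_right_mono mult_left_le_one_le) auto
  qed
  finally show ?thesis unfolding p_def .
qed

lemma expected_bregman_PhiT_le:
  fixes G l :: "real ^ 'n::finite"
  assumes "\<And>j. -1 \<le> l $ j \<and> l $ j \<le> 0"
  shows "expected_bregman (PhiT \<eta> \<alpha>) G l \<le> real CARD('n) powr \<alpha> / (2 * \<eta> * \<alpha>)"
proof -
  have "expected_bregman (PhiT \<eta> \<alpha>) G l \<le> (\<Sum>j\<in>UNIV. maximizer G $ j powr (1 - \<alpha>)) / (2 * \<eta> * \<alpha>)"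
    unfolding expected_bregman_def grad_PhiT sum_divide_distrib
    using assms by (intro sum_mono bregman_term_PhiT_le) auto
  also have "\<dots> \<le> real CARD('n) powr (1 - (1 - \<alpha>)) / (2 * \<eta> * \<alpha>)"
    using eta_pos alpha_pos alpha_less_1
    by (intro divide_right_mono sum_powr_le_card_powr maximizer_in_prob_simplex) auto
  finally show ?thesis by simp
qed

lemma component_le_PhiT: "G $ i \<le> PhiT \<eta> \<alpha> G"
proof -
  have "axis i 1 \<in> prob_simplex"
    unfolding prob_simplex_def by (auto simp: axis_def)
  moreover have "(\<Sum>j\<in>UNIV. axis i (1::real) $ j powr \<alpha>) = (\<Sum>j\<in>UNIV. if j = i then 1 else 0)"
    by (rule sum.cong) (auto simp: axis_def)
  then have "objective G (axis i 1) = G $ i"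
    unfolding objective_def tsallis_def by (simp add: inner_axis')
  ultimately show ?thesis using objective_le_PhiT by metis
qed

lemma PhiT_zero_le: "PhiT \<eta> \<alpha> (0 :: real ^ 'n::finite) \<le> \<eta> * (real CARD('n) powr (1 - \<alpha>) - 1) / (1 - \<alpha>)"
proof -
  have "PhiT \<eta> \<alpha> (0 :: real ^ 'n) = \<eta> / (1 - \<alpha>) * (\<Sum>j\<in>UNIV. maximizer (0 :: real ^ 'n) $ j powr \<alpha>) - \<eta> / (1 - \<alpha>)"
    unfolding PhiT_eq objective_eq by (simp add: sum_distrib_left)
  also have "\<dots> \<le> \<eta> / (1 - \<alpha>) * real CARD('n) powr (1 - \<alpha>) - \<eta> / (1 - \<alpha>)"
    using eta_pos alpha_pos alpha_less_1
    by (intro diff_right_mono mult_left_mono sum_powr_le_card_powr maximizer_in_prob_simplex) auto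
  finally show ?thesis by (simp add: field_simps diff_divide_distrib)
qed

end

theorem theorem2:
  fixes g :: "nat \<Rightarrow> real ^ 'n::finite"
    and T :: nat and \<alpha> \<eta> :: real
  assumes "CARD('n) \<ge> 2"
    and "T \<ge> 1"
    and "0 < \<alpha>" and "\<alpha> < 1"
    and "\<eta> > 0"
    and "\<forall>t\<in>{1..T}. \<forall>i. -1 \<le> g t $ i \<and> g t $ i \<le> 0"
  shows "expected_regret (PhiT \<eta> \<alpha>) g T
           \<le> \<eta> * ((real CARD('n)) powr (1 - \<alpha>) - 1) / (1 - \<alpha>)
             + (real CARD('n)) powr \<alpha> * real T / (2 * \<eta> * \<alpha>)"
proof -
  interpret tsallis_potential \<eta> \<alpha> using assms by unfold_locales auto
  interpret gbpa "PhiT \<eta> \<alpha> :: real ^ 'n \<Rightarrow> real"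
    by unfold_locales (simp_all add: grad_PhiT maximizer_pos sum_maximizer)
  have "expected_regret (PhiT \<eta> \<alpha>) g T
      \<le> PhiT \<eta> \<alpha> (0 :: real ^ 'n) + real T * (real CARD('n) powr \<alpha> / (2 * \<eta> * \<alpha>))"
  proof (rule expected_regret_le)
    show "G $ i \<le> PhiT \<eta> \<alpha> G" for G :: "real ^ 'n" and i by (rule component_le_PhiT)
    show "expected_bregman (PhiT \<eta> \<alpha>) G l \<le> real CARD('n) powr \<alpha> / (2 * \<eta> * \<alpha>)"
      if "\<And>j. -1 \<le> l $ j \<and> l $ j \<le> 0" for G l :: "real ^ 'n"
      using that by (rule expected_bregman_PhiT_le)
  qed (fact assms(6))
  with PhiT_zero_le[where 'n = 'n] show ?thesis by (simp add: mult.commute)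
qed

end
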